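(* There exists an absolute constant $C_2<1$ such that the following holds. Let $p$ be a prime, let $n\geq 2$ with $p>2n$, and let $A=\{v_1,\dots,v_n\}$ be a set of $n$ distinct elements of $\mathbb{Z}_p$. Let $Y_1,Y_2,Y_3$ be independent random variables, each uniformly distributed on $A$, and set $Y=Y_1+Y_2+Y_3$ (sum in $\mathbb{Z}_p$). Then $$\max_{x\in \mathbb{Z}_p} \mathbb{P}[Y=x]\leq\frac{C_2}{n}.$$
   Context: $\mathbb{Z}_p$ denotes the cyclic group of integers modulo the prime $p$. *)

theory Defs
  imports "HOL-Probability.Probability"
begin

text \<open>Z_p is represented by the residues {0..<p} (naturals) with addition mod p.
  Distribution of Y = Y1 + Y2 + Y3 (mod p) for independent Y_i uniform on A.\<close>

definition sum3_dist :: "nat \<Rightarrow> nat set \<Rightarrow> nat pmf" where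
  "sum3_dist p A =
     map_pmf (\<lambda>((a, b), c). (a + b + c) mod p)
       (pair_pmf (pair_pmf (pmf_of_set A) (pmf_of_set A)) (pmf_of_set A))"

end

theory Submission
  imports Defs
begin

text \<open>
  Write \<open>n = |A|\<close>, \<open>N(x)\<close> for the number of triples in \<open>A\<^sup>3\<close> with sum \<open>x\<close>, so that
  \<open>P[Y = x] = N(x) / n\<^sup>3\<close>, and \<open>r(d) = |(A + d) \<inter> A|\<close> for the number of ways to write \<open>d\<close>
  as a difference of two elements of \<open>A\<close>.

  Grouping the triples by their middle entry gives \<open>N(x) = (\<Sum>b\<in>A. |I b|)\<close> with
  \<open>I b = (b + A) \<inter> (x - A)\<close>. Two of these sets lie in \<open>x - A\<close>, so
  \<open>|I b| + |I b'| \<le> n + |(b + A) \<inter> (b' + A)| = n + r(b - b')\<close>; summing over all pairs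
  \<open>(b, b')\<close> gives \<open>2 n N(x) \<le> n\<^sup>3 + E\<close>, where \<open>E = (\<Sum>d. r(d)\<^sup>2)\<close> is the additive energy
  of \<open>A\<close>.

  The energy is bounded away from the trivial \<open>n\<^sup>3\<close>. Since \<open>r(d) + r(e) \<le> r(d + e) + n\<close>, the
  set \<open>V\<close> of differences with \<open>r(d) \<ge> 7n/8\<close> satisfies \<open>V + V \<subseteq> L\<close>, the set of differences
  with \<open>r(d) \<ge> 3n/4\<close>. As \<open>(\<Sum>d. r(d)) = n\<^sup>2\<close>, Markov's inequality gives \<open>|L| \<le> 4n/3 < p\<close>,
  so the Cauchy-Davenport theorem yields \<open>2|V| - 1 \<le> |L|\<close>, i.e. \<open>|V| \<le> 2n/3 + 1/2\<close>. Hence a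
  mass of at least \<open>n\<^sup>2/12\<close> of \<open>r\<close> sits on differences with \<open>r(d) < 7n/8\<close>, which saves
  \<open>n\<^sup>3/96\<close> in \<open>E\<close>. Altogether \<open>N(x) \<le> (191/192) n\<^sup>2\<close>, so \<open>C\<^sub>2 = 191/192\<close> works.
\<close>

definition translate_mod :: "int \<Rightarrow> int \<Rightarrow> int set \<Rightarrow> int set" where
  "translate_mod p d X = (\<lambda>a. (a + d) mod p) ` X"

lemma inj_on_add_mod: "inj_on (\<lambda>a. (a + d) mod p) {0..<p :: int}"
proof (rule inj_onI)
  fix a b :: int
  assume "a \<in> {0..<p}" "b \<in> {0..<p}" "(a + d) mod p = (b + d) mod p"
  then have "p dvd a - b"
    by (simp add: mod_eq_dvd_iff)
  then show "a = b"
    using mod_eq_dvd_iff[of a p b] \<open>a \<in> {0..<p}\<close> \<open>b \<in> {0..<p}\<close> by simp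
qed

lemma translate_mod_subset: "p > 0 \<Longrightarrow> translate_mod p d X \<subseteq> {0..<p}"
  by (auto simp: translate_mod_def)

lemma card_translate_mod: "X \<subseteq> {0..<p} \<Longrightarrow> card (translate_mod p d X) = card X"
  unfolding translate_mod_def by (intro card_image inj_on_subset[OF inj_on_add_mod])

lemma translate_mod_translate_mod:
  "translate_mod p d (translate_mod p e X) = translate_mod p (e + d) X"
  by (force simp: translate_mod_def mod_add_left_eq add.assoc)

lemma translate_mod_mod: "translate_mod p (d mod p) X = translate_mod p d X"
  by (simp add: translate_mod_def mod_add_right_eq)

lemma translate_mod_zero: "X \<subseteq> {0..<p} \<Longrightarrow> translate_mod p 0 X = X"
  by (force simp: translate_mod_def subset_iff)

lemma translate_mod_Int:
  "X \<subseteq> {0..<p} \<Longrightarrow> Y \<subseteq> {0..<p} \<Longrightarrow>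
    translate_mod p d (X \<inter> Y) = translate_mod p d X \<inter> translate_mod p d Y"
  unfolding translate_mod_def
  by (rule inj_on_image_Int[OF inj_on_add_mod])

lemma translate_mod_mono: "X \<subseteq> Y \<Longrightarrow> translate_mod p d X \<subseteq> translate_mod p d Y"
  unfolding translate_mod_def by (rule image_mono)

definition reflect_mod :: "int \<Rightarrow> int \<Rightarrow> int set \<Rightarrow> int set" where
  "reflect_mod p x X = (\<lambda>a. (x - a) mod p) ` X"

lemma inj_on_diff_mod: "inj_on (\<lambda>a. (x - a) mod p) {0..<p :: int}"
proof (rule inj_onI)
  fix a b :: int
  assume "a \<in> {0..<p}" "b \<in> {0..<p}" "(x - a) mod p = (x - b) mod p"
  then have "p dvd b - a"
    by (simp add: mod_eq_dvd_iff)
  then show "a = b"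
    using mod_eq_dvd_iff[of b p a] \<open>a \<in> {0..<p}\<close> \<open>b \<in> {0..<p}\<close> by simp
qed

lemma card_reflect_mod: "X \<subseteq> {0..<p} \<Longrightarrow> card (reflect_mod p x X) = card X"
  unfolding reflect_mod_def by (intro card_image inj_on_subset[OF inj_on_diff_mod])

lemma translate_mod_multiple_subset:
  assumes "X \<subseteq> {0..<p}" "translate_mod p d X \<subseteq> X"
  shows "translate_mod p (int k * d) X \<subseteq> X"
proof (induction k)
  case 0
  then show ?case using assms(1) by (simp add: translate_mod_zero)
next
  case (Suc k)
  have "translate_mod p (int (Suc k) * d) X = translate_mod p d (translate_mod p (int k * d) X)"
    by (simp add: translate_mod_translate_mod algebra_simps)
  also have "\<dots> \<subseteq> translate_mod p d X"
    using Suc.IH by (rule translate_mod_mono)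
  finally show ?case using assms(2) by blast
qed

lemma translate_mod_invariant_eq_residues:
  assumes p: "prime p" and X: "X \<subseteq> {0..<p}" "X \<noteq> {}"
    and d: "\<not> p dvd d" and invariant: "translate_mod p d X \<subseteq> X"
  shows "X = {0..<p}"
proof -
  obtain a where a: "a \<in> X" using X(2) by blast
  let ?orbit = "\<lambda>k::nat. (a + int k * d) mod p"
  have "inj_on ?orbit {..<nat p}"
  proof (rule inj_onI)
    fix k l assume kl: "k \<in> {..<nat p}" "l \<in> {..<nat p}" and "?orbit k = ?orbit l"
    then have "p dvd (int k - int l) * d"
      by (simp add: mod_eq_dvd_iff algebra_simps)
    then have "p dvd int k - int l"
      using p d by (simp add: prime_dvd_mult_iff)
    then have "int k mod p = int l mod p"
      by (simp add: mod_eq_dvd_iff)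
    then show "k = l"
      using kl by simp
  qed
  moreover have "?orbit ` {..<nat p} \<subseteq> X"
    using translate_mod_multiple_subset[OF X(1) invariant] a
    by (force simp: translate_mod_def add.commute)
  ultimately have "card {..<nat p} \<le> card X"
    using finite_subset[OF X(1)] by (intro card_inj_on_le) auto
  then show ?thesis
    using X(1) by (simp add: card_seteq)
qed

section \<open>The Cauchy-Davenport theorem\<close>

definition sumset_mod :: "int \<Rightarrow> int set \<Rightarrow> int set \<Rightarrow> int set" where
  "sumset_mod p X Y = (\<lambda>(a, b). (a + b) mod p) ` (X \<times> Y)"

lemma sumset_mod_subset: "p > 0 \<Longrightarrow> sumset_mod p X Y \<subseteq> {0..<p}"
  by (auto simp: sumset_mod_def)

lemma translate_mod_subset_sumset_mod: "y \<in> Y \<Longrightarrow> translate_mod p y X \<subseteq> sumset_mod p X Y"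
  by (auto simp: translate_mod_def sumset_mod_def)

lemma sumset_mod_translate_mod:
  "sumset_mod p X (translate_mod p e Y) = translate_mod p e (sumset_mod p X Y)"
proof -
  have "sumset_mod p X (translate_mod p e Y) = (\<lambda>(a, b). (a + b + e) mod p) ` (X \<times> Y)"
    unfolding sumset_mod_def translate_mod_def
    by (force simp: mod_add_right_eq add.assoc image_iff)
  also have "\<dots> = translate_mod p e (sumset_mod p X Y)"
    unfolding sumset_mod_def translate_mod_def
    by (force simp: mod_add_left_eq image_iff)
  finally show ?thesis .
qed

lemma sumset_mod_Un_Int_subset: "sumset_mod p (X \<union> Z) (X \<inter> Z) \<subseteq> sumset_mod p X Z"
proof
  fix s assume "s \<in> sumset_mod p (X \<union> Z) (X \<inter> Z)"
  then obtain a b where ab: "a \<in> X \<union> Z" "b \<in> X \<inter> Z" "s = (a + b) mod p"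
    by (auto simp: sumset_mod_def)
  then have "(a, b) \<in> X \<times> Z \<or> (b, a) \<in> X \<times> Z" "s = (b + a) mod p"
    by (auto simp: add.commute)
  then show "s \<in> sumset_mod p X Z"
    using ab(3) unfolding sumset_mod_def by (auto intro: rev_image_eqI)
qed

lemma card_sumset_mod_Un_Int_translate_le:
  assumes "p > 0" "Y \<subseteq> {0..<p}"
  shows "card (sumset_mod p (X \<union> translate_mod p e Y) (X \<inter> translate_mod p e Y))
    \<le> card (sumset_mod p X Y)"
proof -
  have "card (sumset_mod p (X \<union> translate_mod p e Y) (X \<inter> translate_mod p e Y))
      \<le> card (sumset_mod p X (translate_mod p e Y))"
    using sumset_mod_Un_Int_subset finite_subset[OF sumset_mod_subset[OF assms(1)]]
    by (intro card_mono) auto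
  also have "\<dots> = card (sumset_mod p X Y)"
    unfolding sumset_mod_translate_mod
    using card_translate_mod[OF sumset_mod_subset[OF assms(1)]] .
  finally show ?thesis .
qed

lemma card_le_card_sumset_mod:
  assumes "p > 0" "X \<subseteq> {0..<p}" "y \<in> Y"
  shows "card X \<le> card (sumset_mod p X Y)"
proof -
  have "card X = card (translate_mod p y X)"
    using assms(2) by (simp add: card_translate_mod)
  also have "\<dots> \<le> card (sumset_mod p X Y)"
    using assms by (meson card_mono finite_atLeastLessThan_int finite_subset
        sumset_mod_subset translate_mod_subset_sumset_mod)
  finally show ?thesis .
qed

lemma exists_translate_mod_straddling:
  assumes p: "prime p" and X: "X \<subseteq> {0..<p}" "X \<noteq> {}" "X \<noteq> {0..<p}"
    and Y: "Y \<subseteq> {0..<p}" "2 \<le> card Y"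
  obtains e where "translate_mod p e Y \<inter> X \<noteq> {}" "\<not> translate_mod p e Y \<subseteq> X"
proof -
  have "finite Y" using Y(2) by (metis card.infinite not_numeral_le_zero)
  then obtain y1 y2 where y: "y1 \<in> Y" "y2 \<in> Y" "y1 \<noteq> y2"
    using Y(2) card_le_Suc0_iff_eq[of Y] by fastforce
  have "\<exists>e. translate_mod p e Y \<inter> X \<noteq> {} \<and> \<not> translate_mod p e Y \<subseteq> X"
  proof (rule ccontr)
    assume no_straddling: "\<not> ?thesis"
    have "translate_mod p (y2 - y1) X \<subseteq> X"
    proof
      fix b assume "b \<in> translate_mod p (y2 - y1) X"
      then obtain a where a: "a \<in> X" "b = (a + (y2 - y1)) mod p"
        by (auto simp: translate_mod_def)
      have "a = (y1 + (a - y1)) mod p" using a X(1) by auto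
      then have "a \<in> translate_mod p (a - y1) Y"
        using y(1) unfolding translate_mod_def by (rule image_eqI)
      then have "translate_mod p (a - y1) Y \<subseteq> X"
        using a no_straddling by blast
      moreover have "b \<in> translate_mod p (a - y1) Y"
        using a y(2) by (force simp: translate_mod_def algebra_simps)
      ultimately show "b \<in> X" by blast
    qed
    moreover have "y1 \<in> {0..<p}" "y2 \<in> {0..<p}"
      using y Y(1) by auto
    then have "\<not> p dvd y2 - y1"
      using mod_eq_dvd_iff[of y2 p y1] y(3) by auto
    ultimately show False
      using translate_mod_invariant_eq_residues[OF p X(1,2)] X(3) by blast
  qed
  then show ?thesis using that by blast
qed

theorem cauchy_davenport_mod:
  assumes "prime p" "X \<subseteq> {0..<p}" "Y \<subseteq> {0..<p}" "X \<noteq> {}" "Y \<noteq> {}"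
  shows "min (nat p) (card X + card Y - 1) \<le> card (sumset_mod p X Y)"
  using assms(2-)
proof (induction "card Y" arbitrary: X Y rule: less_induct)
  case less
  have p: "p > 0" using assms(1) prime_gt_0_int by blast
  have fin: "finite X" "finite Y"
    using less.prems(1,2) by (auto intro: finite_subset[OF _ finite_atLeastLessThan_int])
  show ?case
  proof (cases "card Y \<le> 1 \<or> X = {0..<p}")
    case True
    obtain y where "y \<in> Y" using less.prems(4) by blast
    then have "card X \<le> card (sumset_mod p X Y)"
      using card_le_card_sumset_mod[OF p less.prems(1)] by blast
    with True show ?thesis by auto
  next
    case False
    txt \<open>Davenport's transform: for a translate \<open>Z\<close> of \<open>Y\<close> that meets \<open>X\<close> without lying in it,
      the pair \<open>(X \<union> Z, X \<inter> Z)\<close> has the same total size, a smaller second component and a sumset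
      inside \<open>X + Z\<close>, a translate of \<open>X + Y\<close>.\<close>
    then obtain e where e: "translate_mod p e Y \<inter> X \<noteq> {}" "\<not> translate_mod p e Y \<subseteq> X"
      using exists_translate_mod_straddling[OF assms(1) less.prems(1,3) _ less.prems(2)] by auto
    define Z where "Z = translate_mod p e Y"
    have Z: "Z \<subseteq> {0..<p}" "card Z = card Y" "finite Z"
      using translate_mod_subset[OF p] card_translate_mod[OF less.prems(2)]
        finite_subset[OF translate_mod_subset[OF p]]
      unfolding Z_def by auto
    have "X \<inter> Z \<subset> Z"
      using e(2) unfolding Z_def by blast
    then have "card (X \<inter> Z) < card Y"
      using psubset_card_mono[OF Z(3)] Z(2) by simp
    moreover have "X \<union> Z \<subseteq> {0..<p}" "X \<inter> Z \<subseteq> {0..<p}" "X \<union> Z \<noteq> {}" "X \<inter> Z \<noteq> {}"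
      using less.prems(1,3) Z(1) e(1) unfolding Z_def by blast+
    ultimately have "min (nat p) (card (X \<union> Z) + card (X \<inter> Z) - 1)
        \<le> card (sumset_mod p (X \<union> Z) (X \<inter> Z))"
      by (rule less.hyps)
    also have "\<dots> \<le> card (sumset_mod p X Y)"
      unfolding Z_def using p less.prems(2) by (rule card_sumset_mod_Un_Int_translate_le)
    finally show ?thesis
      using card_Un_Int[OF fin(1) Z(3)] Z(2) by simp
  qed
qed

section \<open>Difference counts and three-fold sums\<close>

lemma card_Int_add_le:
  assumes "finite U" "X \<subseteq> U" "Y \<subseteq> U"
  shows "card X + card Y \<le> card (X \<inter> Y) + card U"
proof -
  have "card X + card Y = card (X \<union> Y) + card (X \<inter> Y)"
    using assms by (intro card_Un_Int) (auto intro: finite_subset[OF _ assms(1)])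
  moreover have "card (X \<union> Y) \<le> card U"
    using assms by (intro card_mono) auto
  ultimately show ?thesis by linarith
qed

locale residue_set =
  fixes p :: int and A :: "int set"
  assumes modulus_pos: "p > 0" and residues: "A \<subseteq> {0..<p}"
begin

lemma finite_residues: "finite A"
  using residues by (rule finite_subset) simp

lemma mod_residue: "a \<in> A \<Longrightarrow> a mod p = a"
  using residues by auto

definition diff_count :: "int \<Rightarrow> nat" where
  "diff_count d = card (translate_mod p d A \<inter> A)"

lemma diff_count_mod: "diff_count (d mod p) = diff_count d"
  by (simp add: diff_count_def translate_mod_mod)

lemma diff_count_le: "diff_count d \<le> card A"
  unfolding diff_count_def using finite_residues by (simp add: card_mono)

lemma diff_count_zero: "diff_count 0 = card A"
  by (simp add: diff_count_def translate_mod_zero[OF residues])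

lemma diff_count_eq_card_pairs:
  assumes d: "d \<in> {0..<p}"
  shows "diff_count d = card {(b, b') \<in> A \<times> A. (b - b') mod p = d}"
proof -
  have "bij_betw fst {(b, b') \<in> A \<times> A. (b - b') mod p = d} (translate_mod p d A \<inter> A)"
  proof (rule bij_betw_byWitness[where f' = "\<lambda>b. (b, (b - d) mod p)"])
    show "\<forall>t \<in> {(b, b') \<in> A \<times> A. (b - b') mod p = d}. (fst t, (fst t - d) mod p) = t"
    proof
      fix t assume "t \<in> {(b, b') \<in> A \<times> A. (b - b') mod p = d}"
      then obtain b b' where t: "t = (b, b')" "b' \<in> A" "(b - b') mod p = d" by auto
      then have "(b - d) mod p = b'"
        by (simp flip: t(3) add: mod_diff_right_eq mod_residue)
      then show "(fst t, (fst t - d) mod p) = t" using t by simp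
    qed
    show "fst ` {(b, b') \<in> A \<times> A. (b - b') mod p = d} \<subseteq> translate_mod p d A \<inter> A"
    proof
      fix b assume "b \<in> fst ` {(b, b') \<in> A \<times> A. (b - b') mod p = d}"
      then obtain b' where b: "b \<in> A" "b' \<in> A" "(b - b') mod p = d" by auto
      then have "b = (b' + d) mod p"
        by (auto simp: mod_add_right_eq mod_residue)
      then have "b \<in> translate_mod p d A"
        using b(2) unfolding translate_mod_def by (rule image_eqI)
      then show "b \<in> translate_mod p d A \<inter> A" using b(1) by blast
    qed
    show "(\<lambda>b. (b, (b - d) mod p)) ` (translate_mod p d A \<inter> A) \<subseteq> {(b, b') \<in> A \<times> A. (b - b') mod p = d}"
    proof
      fix t assume "t \<in> (\<lambda>b. (b, (b - d) mod p)) ` (translate_mod p d A \<inter> A)"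
      then obtain a b where t: "t = (b, (b - d) mod p)" "a \<in> A" "b \<in> A" "b = (a + d) mod p"
        by (auto simp: translate_mod_def)
      then have "(b - d) mod p = a"
        by (simp add: mod_diff_left_eq mod_residue)
      moreover have "(b - a) mod p = d"
        using t(4) d by (simp add: mod_diff_left_eq)
      ultimately show "t \<in> {(b, b') \<in> A \<times> A. (b - b') mod p = d}"
        using t by (simp add: mod_diff_right_eq)
    qed
  qed simp
  then show ?thesis
    unfolding diff_count_def by (rule bij_betw_same_card[symmetric])
qed

lemma sum_pairs_eq_sum_diff_count:
  "(\<Sum>(b, b')\<in>A \<times> A. f ((b - b') mod p)) = (\<Sum>d\<in>{0..<p}. of_nat (diff_count d) * f d)"
proof -
  let ?g = "\<lambda>(b, b'). (b - b') mod p"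
  have "?g ` (A \<times> A) \<subseteq> {0..<p}"
    using modulus_pos by auto
  then have "(\<Sum>t\<in>A \<times> A. f (?g t)) = (\<Sum>d\<in>{0..<p}. \<Sum>t\<in>{t \<in> A \<times> A. ?g t = d}. f (?g t))"
    using finite_residues by (intro sum.group[symmetric]) auto
  also have "\<dots> = (\<Sum>d\<in>{0..<p}. of_nat (diff_count d) * f d)"
    by (intro sum.cong refl) (simp add: diff_count_eq_card_pairs split_def mem_Times_iff)
  finally show ?thesis by (simp add: case_prod_beta)
qed

lemma sum_diff_count: "(\<Sum>d\<in>{0..<p}. diff_count d) = card A ^ 2"
  using sum_pairs_eq_sum_diff_count[of "\<lambda>_. 1 :: nat"] finite_residues
  by (simp add: card_cartesian_product power2_eq_square)

lemma diff_count_add_le: "diff_count d + diff_count e \<le> diff_count (d + e) + card A"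
proof -
  let ?T = "\<lambda>d. translate_mod p d A"
  have T_residues: "?T d \<subseteq> {0..<p}" for d
    using modulus_pos by (rule translate_mod_subset)
  have "diff_count d = card (translate_mod p e (?T d \<inter> A))"
    unfolding diff_count_def using residues by (intro card_translate_mod[symmetric]) blast
  also have "translate_mod p e (?T d \<inter> A) = ?T (d + e) \<inter> ?T e"
    using T_residues residues by (simp add: translate_mod_Int translate_mod_translate_mod)
  finally have "diff_count d + diff_count e = card (?T (d + e) \<inter> ?T e) + card (?T e \<inter> A)"
    by (simp add: diff_count_def)
  also have "\<dots> \<le> card (?T (d + e) \<inter> ?T e \<inter> (?T e \<inter> A)) + card (?T e)"
    using T_residues
    by (intro card_Int_add_le[where U = "?T e"]) (auto intro: finite_subset[OF _ finite_atLeastLessThan_int])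
  also have "\<dots> \<le> diff_count (d + e) + card A"
    unfolding diff_count_def card_translate_mod[OF residues]
    using finite_residues by (intro add_right_mono card_mono) auto
  finally show ?thesis .
qed

definition additive_energy :: nat where
  "additive_energy = (\<Sum>d\<in>{0..<p}. diff_count d ^ 2)"

lemma sum_diff_count_pairs: "(\<Sum>b\<in>A. \<Sum>b'\<in>A. diff_count (b - b')) = additive_energy"
proof -
  have "(\<Sum>b\<in>A. \<Sum>b'\<in>A. diff_count (b - b')) = (\<Sum>(b, b')\<in>A \<times> A. diff_count ((b - b') mod p))"
    by (simp add: sum.cartesian_product diff_count_mod)
  also have "\<dots> = additive_energy"
    unfolding additive_energy_def sum_pairs_eq_sum_diff_count by (simp add: power2_eq_square)
  finally show ?thesis .
qed

lemma card_translate_Int_add_le: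
  assumes "finite W"
  shows "card (translate_mod p b A \<inter> W) + card (translate_mod p b' A \<inter> W)
    \<le> card W + diff_count (b - b')"
proof -
  let ?T = "\<lambda>d. translate_mod p d A"
  have "translate_mod p b' (?T (b - b') \<inter> A) = ?T b \<inter> ?T b'"
    using translate_mod_subset[OF modulus_pos] residues
    by (simp add: translate_mod_Int translate_mod_translate_mod)
  then have "card (?T b \<inter> ?T b') = diff_count (b - b')"
    unfolding diff_count_def using residues by (metis card_translate_mod le_infI2)
  moreover have "card (?T b \<inter> W) + card (?T b' \<inter> W) \<le> card (?T b \<inter> W \<inter> (?T b' \<inter> W)) + card W"
    using assms by (intro card_Int_add_le) auto
  moreover have "card (?T b \<inter> W \<inter> (?T b' \<inter> W)) \<le> card (?T b \<inter> ?T b')"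
    using finite_subset[OF translate_mod_subset[OF modulus_pos]] by (intro card_mono) auto
  ultimately show ?thesis by linarith
qed

definition sum3_count :: "int \<Rightarrow> nat" where
  "sum3_count x = card {((a, b), c) \<in> (A \<times> A) \<times> A. (a + b + c) mod p = x}"

lemma sum3_first_eq: "a \<in> A \<Longrightarrow> (a + b + c) mod p = x \<Longrightarrow> a = (x - (c + b) mod p) mod p"
  by (auto simp: mod_diff_eq mod_residue)

text \<open>A triple \<open>(a, b, c)\<close> with sum \<open>x\<close> is determined by \<open>b\<close> and \<open>s = b + c\<close>, which ranges
  over \<open>(b + A) \<inter> (x - A)\<close>.\<close>

lemma image_sum3_fibre:
  assumes x: "x \<in> {0..<p}"
  shows "(\<lambda>(a, c). (c + b) mod p) ` {(a, c) \<in> A \<times> A. (a + b + c) mod p = x}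
    = translate_mod p b A \<inter> reflect_mod p x A"
proof (intro equalityI subsetI)
  fix s assume "s \<in> (\<lambda>(a, c). (c + b) mod p) ` {(a, c) \<in> A \<times> A. (a + b + c) mod p = x}"
  then obtain a c where ac: "a \<in> A" "c \<in> A" "(a + b + c) mod p = x" "s = (c + b) mod p"
    by auto
  have "s \<in> translate_mod p b A"
    using ac(4,2) unfolding translate_mod_def by (rule image_eqI)
  moreover have "s = (x - a) mod p"
    using sum3_first_eq[OF ac(1,3)] ac(4) by (simp add: mod_diff_right_eq)
  then have "s \<in> reflect_mod p x A"
    using ac(1) unfolding reflect_mod_def by (rule image_eqI)
  ultimately show "s \<in> translate_mod p b A \<inter> reflect_mod p x A" by blast
next
  fix s assume "s \<in> translate_mod p b A \<inter> reflect_mod p x A"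
  then obtain a c where ac: "a \<in> A" "c \<in> A" "s = (c + b) mod p" "s = (x - a) mod p"
    by (auto simp: translate_mod_def reflect_mod_def)
  have "(a + b + c) mod p = (a + (c + b) mod p) mod p"
    by (simp add: mod_add_right_eq algebra_simps)
  also have "\<dots> = (a + (x - a) mod p) mod p"
    using ac by simp
  also have "\<dots> = x"
    using x by (simp add: mod_add_right_eq)
  finally show "s \<in> (\<lambda>(a, c). (c + b) mod p) ` {(a, c) \<in> A \<times> A. (a + b + c) mod p = x}"
    using ac by force
qed

lemma card_sum3_fibre:
  assumes x: "x \<in> {0..<p}"
  shows "card {(a, c) \<in> A \<times> A. (a + b + c) mod p = x}
    = card (translate_mod p b A \<inter> reflect_mod p x A)"
proof -
  let ?F = "{(a, c) \<in> A \<times> A. (a + b + c) mod p = x}"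
  have "inj_on (\<lambda>(a, c). (c + b) mod p) ?F"
  proof (rule inj_onI)
    fix u v assume F: "u \<in> ?F" "v \<in> ?F"
      and eq: "(\<lambda>(a, c). (c + b) mod p) u = (\<lambda>(a, c). (c + b) mod p) v"
    obtain a c a' c' where uv: "u = (a, c)" "v = (a', c')" by fastforce
    have "(c + b) mod p = (c' + b) mod p"
      using eq uv by simp
    moreover have "c \<in> {0..<p}" "c' \<in> {0..<p}"
      using F residues uv by auto
    ultimately have "c = c'"
      by (rule inj_onD[OF inj_on_add_mod])
    then show "u = v"
      using sum3_first_eq[of a b c x] sum3_first_eq[of a' b c' x] F uv by simp
  qed
  then have "card ((\<lambda>(a, c). (c + b) mod p) ` ?F) = card ?F"
    by (rule card_image)
  then show ?thesis
    using image_sum3_fibre[OF x, of b] by simp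
qed
lemma sum3_count_eq_sum:
  "sum3_count x = (\<Sum>b\<in>A. card {(a, c) \<in> A \<times> A. (a + b + c) mod p = x})"
proof -
  have "bij_betw (\<lambda>((a, b), c). (b, (a, c))) {((a, b), c) \<in> (A \<times> A) \<times> A. (a + b + c) mod p = x}
      (SIGMA b:A. {(a, c) \<in> A \<times> A. (a + b + c) mod p = x})"
    by (rule bij_betw_byWitness[where f' = "\<lambda>(b, (a, c)). ((a, b), c)"]) auto
  then have "sum3_count x = card (SIGMA b:A. {(a, c) \<in> A \<times> A. (a + b + c) mod p = x})"
    unfolding sum3_count_def by (rule bij_betw_same_card)
  also have "\<dots> = (\<Sum>b\<in>A. card {(a, c) \<in> A \<times> A. (a + b + c) mod p = x})"
    using finite_residues
    by (intro card_SigmaI) (auto intro: finite_subset[OF _ finite_cartesian_product[OF finite_residues finite_residues]])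
  finally show ?thesis .
qed

lemma sum3_count_le:
  assumes x: "x \<in> {0..<p}"
  shows "2 * card A * sum3_count x \<le> card A ^ 3 + additive_energy"
proof -
  let ?c = "\<lambda>b. card (translate_mod p b A \<inter> reflect_mod p x A)"
  have R: "finite (reflect_mod p x A)" "card (reflect_mod p x A) = card A"
    using finite_residues card_reflect_mod[OF residues] by (auto simp: reflect_mod_def)
  have "2 * card A * sum3_count x = (\<Sum>b\<in>A. \<Sum>b'\<in>A. ?c b + ?c b')"
    unfolding sum3_count_eq_sum card_sum3_fibre[OF x] by (simp add: sum.distrib sum_distrib_left[symmetric])
  also have "\<dots> \<le> (\<Sum>b\<in>A. \<Sum>b'\<in>A. card A + diff_count (b - b'))"
    using card_translate_Int_add_le[OF R(1)] R(2) by (intro sum_mono) metis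
  also have "\<dots> = card A ^ 3 + additive_energy"
    by (simp add: sum.distrib sum_diff_count_pairs power3_eq_cube)
  finally show ?thesis .
qed

lemma additive_energy_le_unpopular_mass:
  assumes "\<And>d. d \<in> {0..<p} - V \<Longrightarrow> 8 * diff_count d \<le> 7 * card A"
  shows "8 * additive_energy + card A * (\<Sum>d\<in>{0..<p} - V. diff_count d) \<le> 8 * card A ^ 3"
proof -
  have "8 * additive_energy + card A * (\<Sum>d\<in>{0..<p} - V. diff_count d)
      = (\<Sum>d\<in>{0..<p}. 8 * diff_count d ^ 2 + (if d \<in> V then 0 else card A * diff_count d))"
    unfolding additive_energy_def
    by (simp add: sum.distrib sum_distrib_left sum.If_cases Diff_eq)
  also have "\<dots> \<le> (\<Sum>d\<in>{0..<p}. 8 * card A * diff_count d)"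
  proof (rule sum_mono)
    fix d assume "d \<in> {0..<p}"
    then show "8 * diff_count d ^ 2 + (if d \<in> V then 0 else card A * diff_count d)
        \<le> 8 * card A * diff_count d"
      using assms[of d] diff_count_le[of d] by (auto simp: power2_eq_square)
  qed
  also have "\<dots> = 8 * card A ^ 3"
    by (simp add: sum_distrib_left[symmetric] sum_diff_count power3_eq_cube power2_eq_square)
  finally show ?thesis .
qed

end

section \<open>The additive energy of a small set modulo a prime\<close>

locale small_residue_set = residue_set +
  assumes prime_modulus: "prime p"
    and two_le_card: "2 \<le> card A"
    and card_small: "2 * int (card A) < p"
begin

lemma card_large_diff_count:
  "3 * card {d \<in> {0..<p}. 3 * card A \<le> 4 * diff_count d} \<le> 4 * card A"
proof -
  let ?L = "{d \<in> {0..<p}. 3 * card A \<le> 4 * diff_count d}"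
  have "card A * (3 * card ?L) = (\<Sum>d\<in>?L. 3 * card A)"
    by simp
  also have "\<dots> \<le> (\<Sum>d\<in>?L. 4 * diff_count d)"
    by (rule sum_mono) simp
  also have "\<dots> \<le> (\<Sum>d\<in>{0..<p}. 4 * diff_count d)"
    by (rule sum_mono2) auto
  also have "\<dots> = card A * (4 * card A)"
    by (simp add: sum_distrib_left[symmetric] sum_diff_count power2_eq_square)
  finally show ?thesis
    using two_le_card by simp
qed

lemma card_very_large_diff_count:
  "6 * card {d \<in> {0..<p}. 7 * card A \<le> 8 * diff_count d} \<le> 4 * card A + 3"
proof -
  let ?L = "{d \<in> {0..<p}. 3 * card A \<le> 4 * diff_count d}"
  let ?V = "{d \<in> {0..<p}. 7 * card A \<le> 8 * diff_count d}"
  have "sumset_mod p ?V ?V \<subseteq> ?L"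
  proof
    fix s assume "s \<in> sumset_mod p ?V ?V"
    then obtain d e where de: "d \<in> ?V" "e \<in> ?V" "s = (d + e) mod p"
      by (auto simp: sumset_mod_def)
    then have "3 * card A \<le> 4 * diff_count s"
      using diff_count_add_le[of d e] by (simp add: diff_count_mod)
    then show "s \<in> ?L"
      using de(3) modulus_pos by simp
  qed
  then have "card (sumset_mod p ?V ?V) \<le> card ?L"
    by (intro card_mono) (auto intro: finite_subset[OF _ finite_atLeastLessThan_int])
  moreover have "0 \<in> ?V"
    using modulus_pos by (simp add: diff_count_zero)
  then have "min (nat p) (card ?V + card ?V - 1) \<le> card (sumset_mod p ?V ?V)"
    by (intro cauchy_davenport_mod[OF prime_modulus]) auto
  moreover have "card ?L < nat p"
    using card_large_diff_count card_small by linarith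
  ultimately have "card ?V + card ?V - 1 \<le> card ?L"
    by linarith
  then show ?thesis
    using card_large_diff_count by linarith
qed

lemma additive_energy_le: "96 * additive_energy \<le> 95 * card A ^ 3"
proof -
  define n where "n = card A"
  define V where "V = {d \<in> {0..<p}. 7 * n \<le> 8 * diff_count d}"
  define b where "b = (\<Sum>d\<in>{0..<p} - V. diff_count d)"
  have "n ^ 2 = b + (\<Sum>d\<in>V. diff_count d)"
    unfolding b_def n_def sum_diff_count[symmetric] V_def
    by (intro sum.subset_diff) auto
  also have "(\<Sum>d\<in>V. diff_count d) \<le> n * card V"
    using sum_mono[of V diff_count "\<lambda>_. n"] diff_count_le unfolding n_def by (simp add: mult.commute)
  finally have "n * n \<le> n * card V + b" by (simp add: power2_eq_square)
  moreover have "6 * (n * card V) \<le> 4 * (n * n) + 3 * n"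
    using mult_le_mono2[OF card_very_large_diff_count, of n]
    unfolding V_def n_def by (simp add: algebra_simps)
  moreover have "2 * n \<le> n * n"
    using mult_le_mono1[OF two_le_card, of n] unfolding n_def by simp
  ultimately have "n * n \<le> 12 * b"
    by linarith
  then have "n * (n * n) \<le> n * (12 * b)"
    by (rule mult_le_mono2)
  moreover have "8 * additive_energy + n * b \<le> 8 * n ^ 3"
    unfolding n_def b_def by (rule additive_energy_le_unpopular_mass) (auto simp: V_def n_def)
  ultimately show ?thesis
    unfolding n_def[symmetric] power3_eq_cube by linarith
qed

lemma sum3_count_bound:
  assumes "x \<in> {0..<p}"
  shows "192 * sum3_count x \<le> 191 * card A ^ 2"
proof -
  have "192 * (card A * sum3_count x) \<le> 191 * card A ^ 3"
    using sum3_count_le[OF assms] additive_energy_le by linarith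
  then have "card A * (192 * sum3_count x) \<le> card A * (191 * card A ^ 2)"
    by (simp add: power3_eq_cube power2_eq_square ac_simps)
  then show ?thesis
    using two_le_card by simp
qed

end

section \<open>The distribution of \<open>Y\<^sub>1 + Y\<^sub>2 + Y\<^sub>3\<close>\<close>

lemma pair_pmf_of_set:
  assumes "finite X" "X \<noteq> {}" "finite Y" "Y \<noteq> {}"
  shows "pair_pmf (pmf_of_set X) (pmf_of_set Y) = pmf_of_set (X \<times> Y)"
proof (rule pmf_eqI)
  fix t :: "'a \<times> 'b"
  show "pmf (pair_pmf (pmf_of_set X) (pmf_of_set Y)) t = pmf (pmf_of_set (X \<times> Y)) t"
    using assms by (cases t) (simp add: pmf_pair card_cartesian_product split: split_indicator)
qed

lemma pmf_sum3_dist: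
  assumes "finite A" "A \<noteq> {}"
  shows "pmf (sum3_dist p A) x
    = card {((a, b), c) \<in> (A \<times> A) \<times> A. (a + b + c) mod p = x} / real (card A) ^ 3"
proof -
  let ?f = "\<lambda>((a, b), c). (a + b + c) mod p"
  have "pmf (sum3_dist p A) x = measure_pmf.prob (pmf_of_set ((A \<times> A) \<times> A)) (?f -` {x})"
    unfolding sum3_dist_def using assms by (simp add: pair_pmf_of_set pmf_map)
  also have "\<dots> = card ((A \<times> A) \<times> A \<inter> ?f -` {x}) / card ((A \<times> A) \<times> A)"
    using assms by (simp add: measure_pmf_of_set)
  also have "(A \<times> A) \<times> A \<inter> ?f -` {x} = {((a, b), c) \<in> (A \<times> A) \<times> A. (a + b + c) mod p = x}"
    by auto
  finally show ?thesis
    by (simp add: card_cartesian_product power3_eq_cube)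
qed

lemma card_sum3_of_nat:
  fixes A :: "nat set"
  shows "card {((a, b), c) \<in> (A \<times> A) \<times> A. (a + b + c) mod p = x}
    = card {((a, b), c) \<in> (int ` A \<times> int ` A) \<times> int ` A. (a + b + c) mod int p = int x}"
    (is "card ?N = card ?Z")
proof -
  let ?h = "map_prod (map_prod int int) int"
  have sum_mod_iff: "(int a + int b + int c) mod int p = int x \<longleftrightarrow> (a + b + c) mod p = x" for a b c
    by (metis of_nat_add of_nat_eq_iff of_nat_mod)
  have "?Z = ?h ` ?N"
  proof (intro equalityI subsetI)
    fix t assume "t \<in> ?Z"
    then obtain a b c where "t = ((int a, int b), int c)" "a \<in> A" "b \<in> A" "c \<in> A"
        "(int a + int b + int c) mod int p = int x"
      by blast
    then show "t \<in> ?h ` ?N"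
      using sum_mod_iff by force
  next
    fix t assume "t \<in> ?h ` ?N"
    then show "t \<in> ?Z"
      using sum_mod_iff by force
  qed
  moreover have "inj_on ?h ?N"
    by (rule inj_on_subset[OF _ subset_UNIV]) (simp add: prod.inj_map)
  ultimately show ?thesis
    by (simp add: card_image)
qed

theorem proposition3p2:
  shows "\<exists>C2::real. C2 < 1 \<and>
    (\<forall>(p::nat) (n::nat) (A::nat set).
       prime p \<longrightarrow> n \<ge> 2 \<longrightarrow> p > 2 * n \<longrightarrow>
       A \<subseteq> {..<p} \<longrightarrow> card A = n \<longrightarrow>
       (\<forall>x<p. pmf (sum3_dist p A) x \<le> C2 / real n))"
proof (intro exI[of _ "191 / 192"] conjI allI impI)
  fix p n :: nat and A :: "nat set" and x :: nat
  assume p: "prime p" and n: "n \<ge> 2" "p > 2 * n" and A: "A \<subseteq> {..<p}" "card A = n" and x: "x < p"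
  have card_int: "card (int ` A) = n"
    using A(2) by (simp add: card_image)
  interpret small_residue_set "int p" "int ` A"
    using p n A(1) card_int by unfold_locales (auto simp: prime_gt_0_nat)
  have "finite A" "A \<noteq> {}"
    using A n finite_subset[OF A(1)] by auto
  then have "pmf (sum3_dist p A) x
      = card {((a, b), c) \<in> (A \<times> A) \<times> A. (a + b + c) mod p = x} / real (card A) ^ 3"
    by (rule pmf_sum3_dist)
  also have "\<dots> = sum3_count (int x) / real n ^ 3"
    unfolding sum3_count_def card_sum3_of_nat A(2) ..
  also have "\<dots> \<le> (191 / 192 * real n ^ 2) / real n ^ 3"
  proof (rule divide_right_mono)
    have "192 * sum3_count (int x) \<le> 191 * n ^ 2"
      using sum3_count_bound[of "int x"] x card_int by simp
    then have "real (192 * sum3_count (int x)) \<le> real (191 * n ^ 2)"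
      by (rule of_nat_mono)
    then show "real (sum3_count (int x)) \<le> 191 / 192 * real n ^ 2"
      by simp
  qed simp
  also have "\<dots> = 191 / 192 / n"
    using n by (simp add: power2_eq_square power3_eq_cube)
  finally show "pmf (sum3_dist p A) x \<le> 191 / 192 / n" .
qed simp

end
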